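(* For $\mathbf F=(F_1,\dots,F_n)\in\mathcal M^n$ and $\Lambda\in\mathcal Q_n$, $\mathcal D_n(\Lambda\mathbf F)\subset\mathcal D_n(F,\dots,F)$, where $F=\frac1n\sum_{i=1}^n F_i$.
   Context: Work on an atomless probability space. $\mathcal M$ is the set of cdfs on $\mathbb{R}$. For $\mathbf G=(G_1,\dots,G_n)\in\mathcal M^n$, $\mathcal D_n(\mathbf G)=\{\text{cdf of } X_1+\dots+X_n: X_i\sim G_i,\ i=1,\dots,n\}$. $\mathcal Q_n$ is the set of $n\times n$ doubly stochastic matrices. For $\Lambda=(\Lambda_{ij})\in\mathcal Q_n$, $\Lambda\mathbf F$ is the tuple whose $i$-th component is the cdf $\sum_{j}\Lambda_{ij}F_j$. *)

theory Defs
  imports "HOL-Probability.Probability"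
begin

definition is_cdf :: "(real \<Rightarrow> real) \<Rightarrow> bool" where
  "is_cdf F \<longleftrightarrow> mono F \<and> (\<forall>x. continuous (at_right x) F)
     \<and> (F \<longlongrightarrow> 0) at_bot \<and> (F \<longlongrightarrow> 1) at_top"

definition atomless :: "'a measure \<Rightarrow> bool" where
  "atomless M \<longleftrightarrow> (\<forall>A\<in>sets M. measure M A > 0 \<longrightarrow>
     (\<exists>B\<in>sets M. B \<subseteq> A \<and> 0 < measure M B \<and> measure M B < measure M A))"

definition Dn :: "'a measure \<Rightarrow> nat \<Rightarrow> (nat \<Rightarrow> real \<Rightarrow> real) \<Rightarrow> (real \<Rightarrow> real) set" where
  "Dn M n G = {H. \<exists>X :: nat \<Rightarrow> 'a \<Rightarrow> real.
      (\<forall>i<n. X i \<in> borel_measurable M \<and> cdf (distr M borel (X i)) = G i) \<and>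
      H = cdf (distr M borel (\<lambda>\<omega>. \<Sum>i<n. X i \<omega>))}"

definition doubly_stochastic :: "nat \<Rightarrow> (nat \<Rightarrow> nat \<Rightarrow> real) \<Rightarrow> bool" where
  "doubly_stochastic n L \<longleftrightarrow> (\<forall>i<n. \<forall>j<n. L i j \<ge> 0)
     \<and> (\<forall>i<n. (\<Sum>j<n. L i j) = 1) \<and> (\<forall>j<n. (\<Sum>i<n. L i j) = 1)"

definition mat_mix :: "nat \<Rightarrow> (nat \<Rightarrow> nat \<Rightarrow> real) \<Rightarrow> (nat \<Rightarrow> real \<Rightarrow> real) \<Rightarrow> nat \<Rightarrow> real \<Rightarrow> real" where
  "mat_mix n L F = (\<lambda>i x. \<Sum>j<n. L i j * F j x)"

end

theory Submission
  imports Defs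
begin

text \<open>Given \<open>X\<close> with \<open>X i\<close> distributed as \<open>(\<Lambda>F) i\<close>, draw an index \<open>K\<close> uniformly from
  \<open>{0..<n}\<close> and, independently of \<open>K\<close>, a copy \<open>Z\<close> of the whole vector \<open>X\<close>, and put
  \<open>Y i = Z ((i + K) mod n)\<close>. Each \<open>Y i\<close> is then distributed as the average of the laws of
  the \<open>X j\<close>, which is \<open>(1/n) \<Sum>j. F j\<close> because the columns of \<open>\<Lambda>\<close> sum to \<open>1\<close>, while
  \<open>\<Sum>i. Y i = \<Sum>i. Z i\<close> has the law of \<open>\<Sum>i. X i\<close>. Atomlessness supplies \<open>K\<close> and \<open>Z\<close>:
  by Sierpinski's theorem it carries a variable that is uniform on any given event, and the
  quantile transform of that variable reproduces the law of \<open>X\<close> once the vector is encoded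
  into a single real by interleaving digits.\<close>

lemma measure_distr_borel:
  assumes "f \<in> borel_measurable M" "B \<in> sets borel"
  shows "measure (distr M borel f) B = measure M {\<omega>\<in>space M. f \<omega> \<in> B}"
  using assms by (simp add: measure_distr vimage_def Int_def conj_commute)

lemma cdf_distr_borel:
  "f \<in> borel_measurable M \<Longrightarrow> cdf (distr M borel f) x = measure M {\<omega>\<in>space M. f \<omega> \<le> x}"
  unfolding cdf_def by (simp add: measure_distr_borel)

lemma borel_measurable_quantile:
  assumes N: "real_distribution N" and U: "U \<in> borel_measurable M" "\<And>\<omega>. 0 < U \<omega> \<and> U \<omega> < 1"
  shows "(\<lambda>\<omega>. Inf {x. U \<omega> \<le> cdf N x}) \<in> borel_measurable M"
proof -
  interpret N: cdf_distribution N
    unfolding cdf_distribution_def by (rule N)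
  have "U \<in> measurable M (restrict_space borel {0<..<1})"
    using U by (intro measurable_restrict_space2) auto
  then show ?thesis
    by (rule measurable_comp[OF _ N.measurable_CI, unfolded comp_def])
qed

section \<open>Sierpinski's theorem\<close>

context prob_space
begin

lemma atomless_half_subevent:
  assumes "atomless M" "D \<in> events" "prob D > 0"
  obtains E where "E \<in> events" "E \<subseteq> D" "0 < prob E" "prob E \<le> prob D / 2"
proof -
  obtain E where E: "E \<in> events" "E \<subseteq> D" "0 < prob E" "prob E < prob D"
    using assms unfolding atomless_def by blast
  have "prob (D - E) = prob D - prob E"
    using E assms(2) by (simp add: finite_measure_Diff)
  then show ?thesis
    using that[of E] that[of "D - E"] E assms(2) by (cases "prob E \<le> prob D / 2") auto
qed

lemma atomless_small_subevent:
  assumes "atomless M" "B \<in> events" "prob B > 0" "e > 0"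
  obtains C where "C \<in> events" "C \<subseteq> B" "0 < prob C" "prob C < e"
proof -
  have "\<exists>C\<in>events. C \<subseteq> B \<and> 0 < prob C \<and> prob C \<le> prob B / 2^k" for k
  proof (induction k)
    case 0
    then show ?case
      using assms by auto
  next
    case (Suc k)
    then obtain C where C: "C \<in> events" "C \<subseteq> B" "0 < prob C" "prob C \<le> prob B / 2^k"
      by blast
    obtain D where "D \<in> events" "D \<subseteq> C" "0 < prob D" "prob D \<le> prob C / 2"
      using atomless_half_subevent[OF assms(1) C(1,3)] by blast
    moreover have "prob C / 2 \<le> prob B / 2^Suc k"
      using C(4) by (simp add: field_simps)
    ultimately show ?case using C by (intro bexI[of _ D]) auto
  qed
  moreover obtain k where "(1/2::real)^k < e"
    using real_arch_pow_inv[of e "1/2"] assms by auto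
  moreover have "prob B / 2^k \<le> (1/2)^k"
    by (simp add: power_one_over divide_right_mono)
  ultimately show ?thesis using that by (meson le_less_trans order.trans)
qed

lemma exists_half_maximal_subevent:
  assumes "B \<in> events" "prob B \<le> t"
  obtains C where "C \<in> events" "C \<subseteq> A - B" "prob B + prob C \<le> t"
    "\<And>D. D \<in> events \<Longrightarrow> D \<subseteq> A - B \<Longrightarrow> prob B + prob D \<le> t \<Longrightarrow> prob D \<le> 2 * prob C"
proof -
  define X where "X = {prob C | C. C \<in> events \<and> C \<subseteq> A - B \<and> prob B + prob C \<le> t}"
  have bdd: "bdd_above X"
    unfolding X_def by (auto intro!: bdd_aboveI[of _ 1])
  have "0 \<in> X"
    using assms unfolding X_def by (auto intro!: exI[of _ "{}"])
  have le_Sup: "prob D \<le> Sup X"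
    if "D \<in> events" "D \<subseteq> A - B" "prob B + prob D \<le> t" for D
    using that bdd unfolding X_def by (intro cSup_upper) auto
  show ?thesis
  proof (cases "Sup X \<le> 0")
    case True
    show ?thesis
    proof (rule that[of "{}"])
      fix D assume "D \<in> events" "D \<subseteq> A - B" "prob B + prob D \<le> t"
      then show "prob D \<le> 2 * prob {}"
        using le_Sup True by fastforce
    qed (use assms in auto)
  next
    case False
    then obtain x where "x \<in> X" "Sup X / 2 < x"
      using less_cSup_iff[OF _ bdd, of "Sup X / 2"] \<open>0 \<in> X\<close> by auto
    then obtain C where C: "C \<in> events" "C \<subseteq> A - B" "prob B + prob C \<le> t" "Sup X / 2 < prob C"
      unfolding X_def by blast
    show ?thesis
    proof (rule that[OF C(1-3)])
      fix D assume "D \<in> events" "D \<subseteq> A - B" "prob B + prob D \<le> t"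
      then show "prob D \<le> 2 * prob C"
        using le_Sup C(4) by fastforce
    qed
  qed
qed

lemma atomless_greedy_limit:
  assumes al: "atomless M" and A: "A \<in> events" and "t \<le> prob A"
    and Bs: "\<And>k. Bs k \<in> events" "\<And>k. Bs k \<subseteq> A" "\<And>k. prob (Bs k) \<le> t" "incseq Bs"
    and greedy: "\<And>k D. D \<in> events \<Longrightarrow> D \<subseteq> A - Bs k \<Longrightarrow> prob (Bs k) + prob D \<le> t \<Longrightarrow>
      prob D \<le> 2 * (prob (Bs (Suc k)) - prob (Bs k))"
  shows "prob (\<Union>k. Bs k) = t"
proof -
  define B where "B = (\<Union>k. Bs k)"
  have B: "B \<in> events" "B \<subseteq> A"
    using Bs unfolding B_def by auto
  have "(\<lambda>k. prob (Bs k)) \<longlonglongrightarrow> prob B"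
    unfolding B_def using Bs by (intro finite_Lim_measure_incseq) auto
  then have "prob B \<le> t"
    using Bs by (intro LIMSEQ_le_const2) auto
  moreover have "\<not> prob B < t"
  proof
    assume lt: "prob B < t"
    have "prob (A - B) = prob A - prob B"
      using A B by (simp add: finite_measure_Diff)
    then obtain D where D: "D \<in> events" "D \<subseteq> A - B" "0 < prob D" "prob D < t - prob B"
      using atomless_small_subevent[OF al, of "A - B" "t - prob B"] A B lt assms(3) by auto
    have grow: "prob (Bs k) + prob D / 2 \<le> prob (Bs (Suc k))" for k
    proof -
      have "Bs k \<subseteq> B"
        unfolding B_def by auto
      then have "prob (Bs k) \<le> prob B" "D \<subseteq> A - Bs k"
        using Bs B D(2) by (auto intro: finite_measure_mono)
      then show ?thesis
        using greedy[of D k] D by simp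
    qed
    have lin: "real k * (prob D / 2) \<le> prob (Bs k)" for k
    proof (induction k)
      case (Suc k)
      then show ?case
        using grow[of k] by (simp add: algebra_simps)
    qed simp
    obtain k where "2 / prob D < real k"
      using reals_Archimedean2 by blast
    then show False
      using D(3) lin[of k] prob_le_1[of "Bs k"] by (simp add: field_simps)
  qed
  ultimately show ?thesis
    unfolding B_def by simp
qed

lemma atomless_subevent_of_prob:
  assumes al: "atomless M" and A: "A \<in> events" and t: "0 \<le> t" "t \<le> prob A"
  obtains B where "B \<in> events" "B \<subseteq> A" "prob B = t"
proof -
  define good where "good B C \<longleftrightarrow> C \<in> events \<and> C \<subseteq> A - B \<and> prob B + prob C \<le> t \<and>
      (\<forall>D\<in>events. D \<subseteq> A - B \<longrightarrow> prob B + prob D \<le> t \<longrightarrow> prob D \<le> 2 * prob C)" for B C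
  have "\<forall>B. \<exists>C. B \<in> events \<and> prob B \<le> t \<longrightarrow> good B C"
    unfolding good_def by (metis exists_half_maximal_subevent)
  then obtain step where step: "\<And>B. B \<in> events \<Longrightarrow> prob B \<le> t \<Longrightarrow> good B (step B)"
    by metis
  define Bs where "Bs k = ((\<lambda>B. B \<union> step B) ^^ k) {}" for k
  have Bs_Suc: "Bs (Suc k) = Bs k \<union> step (Bs k)" for k
    by (simp add: Bs_def)
  have prob_union_step: "prob (B \<union> step B) = prob B + prob (step B)"
    if "B \<in> events" "prob B \<le> t" for B
    using step[OF that] that by (intro finite_measure_Union) (auto simp: good_def)
  have Bs: "Bs k \<in> events \<and> Bs k \<subseteq> A \<and> prob (Bs k) \<le> t" for k
  proof (induction k)
    case 0
    then show ?case
      using t by (simp add: Bs_def)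
  next
    case (Suc k)
    then show ?case
      using step[of "Bs k"] prob_union_step[of "Bs k"] by (auto simp: Bs_Suc good_def)
  qed
  have "prob (\<Union>k. Bs k) = t"
  proof (rule atomless_greedy_limit[OF al A t(2)])
    show "incseq Bs"
      by (intro incseq_SucI) (simp add: Bs_Suc)
    show "prob D \<le> 2 * (prob (Bs (Suc k)) - prob (Bs k))"
      if "D \<in> events" "D \<subseteq> A - Bs k" "prob (Bs k) + prob D \<le> t" for k D
      using that step[of "Bs k"] prob_union_step[of "Bs k"] Bs[of k]
      unfolding Bs_Suc good_def by simp
  qed (use Bs in auto)
  moreover have "(\<Union>k. Bs k) \<in> events" "(\<Union>k. Bs k) \<subseteq> A"
    using Bs by auto
  ultimately show ?thesis
    using that by blast
qed

end

section \<open>A uniform variable on an event\<close>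

definition halfway_event :: "'a measure \<Rightarrow> 'a set \<Rightarrow> 'a set \<Rightarrow> 'a set" where
  "halfway_event M X Y = X \<union>
     (SOME C. C \<in> sets M \<and> C \<subseteq> Y - X \<and> measure M C = (measure M Y - measure M X) / 2)"

text \<open>\<open>dyadic_event M A m j\<close> will become the event \<open>A \<inter> {U \<le> j / 2^m}\<close> of a
  variable \<open>U\<close> that is uniform on \<open>A\<close>; each level is obtained from the previous one by
  inserting halfway events.\<close>

fun dyadic_event :: "'a measure \<Rightarrow> 'a set \<Rightarrow> nat \<Rightarrow> nat \<Rightarrow> 'a set" where
  "dyadic_event M A 0 j = (if j = 0 then {} else A)"
| "dyadic_event M A (Suc m) j = (if even j then dyadic_event M A m (j div 2)
     else halfway_event M (dyadic_event M A m (j div 2)) (dyadic_event M A m (j div 2 + 1)))"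

lemma halfway_event_same: "halfway_event M X X = X"
proof -
  let ?half = "\<lambda>C. C \<in> sets M \<and> C \<subseteq> X - X \<and> measure M C = (measure M X - measure M X) / 2"
  have "?half (SOME C. ?half C)"
    by (rule someI[of _ "{}"]) simp
  then show ?thesis
    unfolding halfway_event_def by auto
qed

context prob_space
begin

lemma halfway_event:
  assumes "atomless M" "X \<in> events" "Y \<in> events" "X \<subseteq> Y"
  shows "halfway_event M X Y \<in> events" "X \<subseteq> halfway_event M X Y" "halfway_event M X Y \<subseteq> Y"
    "prob (halfway_event M X Y) = (prob X + prob Y) / 2"
proof -
  let ?half = "\<lambda>C. C \<in> events \<and> C \<subseteq> Y - X \<and> prob C = (prob Y - prob X) / 2"
  have diff: "prob (Y - X) = prob Y - prob X" "prob X \<le> prob Y"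
    using assms by (auto simp: finite_measure_Diff intro: finite_measure_mono)
  obtain C where "C \<in> events" "C \<subseteq> Y - X" "prob C = (prob Y - prob X) / 2"
    by (rule atomless_subevent_of_prob[OF assms(1), of "Y - X" "(prob Y - prob X) / 2"])
      (use assms diff in auto)
  then have "?half C"
    by blast
  then have C: "?half (SOME C. ?half C)"
    by (rule someI)
  then show "halfway_event M X Y \<in> events" "X \<subseteq> halfway_event M X Y"
    "halfway_event M X Y \<subseteq> Y"
    using assms unfolding halfway_event_def by auto
  have "prob (halfway_event M X Y) = prob X + prob (SOME C. ?half C)"
    unfolding halfway_event_def using C assms by (intro finite_measure_Union) auto
  then show "prob (halfway_event M X Y) = (prob X + prob Y) / 2"
    using C by simp
qed

lemma dyadic_event_Suc:
  assumes al: "atomless M" and A: "A \<in> events"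
    and ev: "\<And>j. dyadic_event M A m j \<in> events"
    and mono: "\<And>j. dyadic_event M A m j \<subseteq> dyadic_event M A m (Suc j)"
    and prob: "\<And>j. prob (dyadic_event M A m j) = real (min j (2^m)) / 2^m * prob A"
    and top: "\<And>j. 2^m \<le> j \<Longrightarrow> dyadic_event M A m j = A"
  shows "dyadic_event M A (Suc m) j \<in> events"
    "dyadic_event M A (Suc m) j \<subseteq> dyadic_event M A (Suc m) (Suc j)"
    "prob (dyadic_event M A (Suc m) j) = real (min j (2^Suc m)) / 2^Suc m * prob A"
    "2^Suc m \<le> j \<Longrightarrow> dyadic_event M A (Suc m) j = A"
proof -
  let ?E = "dyadic_event M A m"
  note half = halfway_event[OF al ev ev mono]
  obtain i where j: "j = 2 * i \<or> j = 2 * i + 1"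
    by (metis oddE evenE)
  show "dyadic_event M A (Suc m) j \<in> events"
    using j ev half(1) by auto
  show "dyadic_event M A (Suc m) j \<subseteq> dyadic_event M A (Suc m) (Suc j)"
    using j half(2,3)[of i] by auto
  show "2^Suc m \<le> j \<Longrightarrow> dyadic_event M A (Suc m) j = A"
    using j top[of i] top[of "Suc i"] by (auto simp: halfway_event_same)
  show "prob (dyadic_event M A (Suc m) j) = real (min j (2^Suc m)) / 2^Suc m * prob A"
  proof (cases "j = 2 * i + 1 \<and> i < 2^m")
    case True
    then have "prob (dyadic_event M A (Suc m) j) = (prob (?E i) + prob (?E (Suc i))) / 2"
      using half(4) by simp
    also have "\<dots> = real j / 2^Suc m * prob A"
      using True by (simp add: prob min_def field_simps)
    finally show ?thesis
      using True by simp
  next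
    case False
    with j consider "j = 2 * i" | "j = 2 * i + 1" "2^m \<le> i"
      by fastforce
    then show ?thesis
    proof cases
      case 1
      then show ?thesis
        by (simp add: prob min_def)
    next
      case 2
      then show ?thesis
        using top[of i] top[of "Suc i"] by (simp add: halfway_event_same min_def)
    qed
  qed
qed

lemma
  assumes al: "atomless M" and A: "A \<in> events"
  shows dyadic_event_in_events: "dyadic_event M A m j \<in> events"
    and dyadic_event_mono: "j \<le> j' \<Longrightarrow> dyadic_event M A m j \<subseteq> dyadic_event M A m j'"
    and prob_dyadic_event: "prob (dyadic_event M A m j) = real (min j (2^m)) / 2^m * prob A"
    and dyadic_event_top: "2^m \<le> j \<Longrightarrow> dyadic_event M A m j = A"
proof -
  have "\<forall>j. dyadic_event M A m j \<in> events \<and>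
      dyadic_event M A m j \<subseteq> dyadic_event M A m (Suc j) \<and>
      prob (dyadic_event M A m j) = real (min j (2^m)) / 2^m * prob A \<and>
      (2^m \<le> j \<longrightarrow> dyadic_event M A m j = A)"
  proof (induction m)
    case 0
    then show ?case
      using A by simp
  next
    case (Suc m)
    then have "dyadic_event M A m j \<in> events"
      "dyadic_event M A m j \<subseteq> dyadic_event M A m (Suc j)"
      "prob (dyadic_event M A m j) = real (min j (2^m)) / 2^m * prob A"
      "2^m \<le> j \<Longrightarrow> dyadic_event M A m j = A" for j
      by simp_all
    note step = dyadic_event_Suc[OF al A this]
    show ?case
      by (intro allI conjI impI step)
  qed
  note all = this
  then show "dyadic_event M A m j \<in> events"
    "prob (dyadic_event M A m j) = real (min j (2^m)) / 2^m * prob A"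
    "2^m \<le> j \<Longrightarrow> dyadic_event M A m j = A"
    by simp_all
  show "j \<le> j' \<Longrightarrow> dyadic_event M A m j \<subseteq> dyadic_event M A m j'"
    by (rule lift_Suc_mono_le[of "dyadic_event M A m"]) (use all in simp_all)
qed

end

definition dyadic_above :: "real \<Rightarrow> nat \<Rightarrow> nat" where
  "dyadic_above t m = nat \<lfloor>t * 2^m\<rfloor> + 1"

lemma dyadic_above_le_iff:
  assumes "0 \<le> t"
  shows "dyadic_above t m \<le> j \<longleftrightarrow> t < real j / 2^m"
proof -
  have "dyadic_above t m \<le> j \<longleftrightarrow> \<lfloor>t * 2^m\<rfloor> < int j"
    unfolding dyadic_above_def using assms by (simp add: Suc_le_eq nat_less_iff)
  also have "\<dots> \<longleftrightarrow> t < real j / 2^m"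
    by (simp add: floor_less_iff pos_less_divide_eq)
  finally show ?thesis .
qed

lemma dyadic_above_gt: "0 \<le> t \<Longrightarrow> t < real (dyadic_above t m) / 2^m"
  using dyadic_above_le_iff by blast

lemma dyadic_above_le: "0 \<le> t \<Longrightarrow> real (dyadic_above t m) / 2^m \<le> t + 1 / 2^m"
  unfolding dyadic_above_def by (simp add: field_simps)

lemma dyadic_above_Suc:
  assumes "0 \<le> t"
  shows "real (dyadic_above t (Suc m)) / 2^Suc m \<le> real (dyadic_above t m) / 2^m"
proof -
  have "dyadic_above t (Suc m) \<le> 2 * dyadic_above t m"
    using dyadic_above_gt[OF assms, of m] by (simp add: dyadic_above_le_iff[OF assms])
  then show ?thesis
    by (simp add: field_simps)
qed

lemma dyadic_above_tendsto:
  assumes "0 \<le> t"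
  shows "(\<lambda>m. real (dyadic_above t m) / 2^m) \<longlonglongrightarrow> t"
proof (rule tendsto_sandwich[of "\<lambda>_. t" _ _ "\<lambda>m. t + (1/2)^m"])
  show "\<forall>\<^sub>F m in sequentially. t \<le> real (dyadic_above t m) / 2^m"
    using dyadic_above_gt[OF assms] by (simp add: less_imp_le)
  show "\<forall>\<^sub>F m in sequentially. real (dyadic_above t m) / 2^m \<le> t + (1/2)^m"
    using dyadic_above_le[OF assms] by (simp add: power_one_over)
  show "(\<lambda>m. t + (1/2::real)^m) \<longlonglongrightarrow> t"
    using tendsto_add[OF tendsto_const LIMSEQ_power_zero[of "1/2::real"]] by simp
qed simp

lemma dyadic_event_refine: "dyadic_event M A (m + k) (j * 2^k) = dyadic_event M A m j"
  by (induction k) (simp_all add: ac_simps)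

definition dyadic_rank :: "'a measure \<Rightarrow> 'a set \<Rightarrow> 'a \<Rightarrow> real" where
  "dyadic_rank M A \<omega> =
     (if \<omega> \<in> A then Inf {real j / 2^m | m j. \<omega> \<in> dyadic_event M A m j} else 0)"

context prob_space
begin

lemma dyadic_event_subset:
  assumes "atomless M" "A \<in> events"
  shows "dyadic_event M A m j \<subseteq> A"
  using dyadic_event_mono[OF assms, where m=m and j=j and j'="max j (2^m)"]
    dyadic_event_top[OF assms, of m]
  by simp

lemma dyadic_event_mono_ratio:
  assumes "atomless M" "A \<in> events" "real j / 2^m \<le> real j' / 2^m'"
  shows "dyadic_event M A m j \<subseteq> dyadic_event M A m' j'"
proof -
  have "real (j * 2^m') \<le> real (j' * 2^m)"
    using assms(3) by (simp add: field_simps)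
  then have "dyadic_event M A (m + m') (j * 2^m') \<subseteq> dyadic_event M A (m' + m) (j' * 2^m)"
    unfolding of_nat_le_iff add.commute[of m'] by (rule dyadic_event_mono[OF assms(1,2)])
  then show ?thesis
    by (simp only: dyadic_event_refine)
qed

lemma dyadic_rank_le_iff:
  assumes al: "atomless M" and A: "A \<in> events" and \<omega>: "\<omega> \<in> A" and t: "0 \<le> t"
  shows "dyadic_rank M A \<omega> \<le> t \<longleftrightarrow> (\<forall>m. \<omega> \<in> dyadic_event M A m (dyadic_above t m))"
proof -
  define R where "R = {real j / 2^m | m j. \<omega> \<in> dyadic_event M A m j}"
  have "1 \<in> R"
    using \<omega> unfolding R_def by (auto intro!: exI[of _ 0] exI[of _ 1])
  have bdd: "bdd_below R"
    unfolding R_def by (auto intro!: bdd_belowI[of _ 0])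
  have rank: "dyadic_rank M A \<omega> = Inf R"
    using \<omega> unfolding dyadic_rank_def R_def by simp
  show ?thesis
  proof
    assume le: "dyadic_rank M A \<omega> \<le> t"
    show "\<forall>m. \<omega> \<in> dyadic_event M A m (dyadic_above t m)"
    proof
      fix m
      have "Inf R < real (dyadic_above t m) / 2^m"
        using le dyadic_above_gt[OF t, of m] unfolding rank by simp
      then obtain m' j' where "\<omega> \<in> dyadic_event M A m' j'"
        "real j' / 2^m' < real (dyadic_above t m) / 2^m"
        using cInf_less_iff[OF _ bdd] \<open>1 \<in> R\<close> unfolding R_def by blast
      then show "\<omega> \<in> dyadic_event M A m (dyadic_above t m)"
        using dyadic_event_mono_ratio[OF al A, where m=m' and j=j' and m'=m and j'="dyadic_above t m"]
        by auto
    qed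
  next
    assume all: "\<forall>m. \<omega> \<in> dyadic_event M A m (dyadic_above t m)"
    have "dyadic_rank M A \<omega> \<le> real (dyadic_above t m) / 2^m" for m
      unfolding rank using all bdd unfolding R_def by (intro cInf_lower) auto
    then show "dyadic_rank M A \<omega> \<le> t"
      by (intro LIMSEQ_le_const[OF dyadic_above_tendsto[OF t]]) simp
  qed
qed

lemma dyadic_rank_level_set:
  assumes al: "atomless M" and A: "A \<in> events" and t: "0 \<le> t"
  shows "{\<omega>\<in>A. dyadic_rank M A \<omega> \<le> t} = (\<Inter>m. dyadic_event M A m (dyadic_above t m))"
proof -
  have "(\<Inter>m. dyadic_event M A m (dyadic_above t m)) \<subseteq> A"
    using dyadic_event_subset[OF al A, of 0] by blast
  then show ?thesis
    using dyadic_rank_le_iff[OF al A _ t] by auto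
qed

lemma dyadic_rank_nonneg: "0 \<le> dyadic_rank M A \<omega>"
proof (cases "\<omega> \<in> A")
  case True
  then have "\<omega> \<in> dyadic_event M A 0 1"
    by simp
  then have "{real j / 2^m | m j. \<omega> \<in> dyadic_event M A m j} \<noteq> {}"
    by blast
  then show ?thesis
    using True unfolding dyadic_rank_def by (auto intro!: cInf_greatest)
qed (simp add: dyadic_rank_def)

lemma events_dyadic_rank_le:
  assumes al: "atomless M" and A: "A \<in> events"
  shows "{\<omega>\<in>A. dyadic_rank M A \<omega> \<le> t} \<in> events"
proof (cases "0 \<le> t")
  case True
  then show ?thesis
    using dyadic_event_in_events[OF al A] by (simp add: dyadic_rank_level_set[OF al A])
next
  case False
  then have "{\<omega>\<in>A. dyadic_rank M A \<omega> \<le> t} = {}"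
    using False by (auto dest: order.trans[OF dyadic_rank_nonneg])
  then show ?thesis
    by (simp only: sets.empty_sets)
qed

lemma prob_dyadic_rank_le:
  assumes al: "atomless M" and A: "A \<in> events" and t: "0 \<le> t" "t \<le> 1"
  shows "prob {\<omega>\<in>A. dyadic_rank M A \<omega> \<le> t} = t * prob A"
proof -
  let ?E = "\<lambda>m. dyadic_event M A m (dyadic_above t m)"
  have "decseq ?E"
    by (intro decseq_SucI dyadic_event_mono_ratio[OF al A] dyadic_above_Suc[OF t(1)])
  then have "(\<lambda>m. prob (?E m)) \<longlonglongrightarrow> prob (\<Inter>m. ?E m)"
    using dyadic_event_in_events[OF al A] by (intro finite_Lim_measure_decseq) auto
  moreover have "prob (?E m) = min (real (dyadic_above t m) / 2^m) 1 * prob A" for m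
    by (simp add: prob_dyadic_event[OF al A] of_nat_min min_divide_distrib_right)
  then have "(\<lambda>m. prob (?E m)) \<longlonglongrightarrow> min t 1 * prob A"
    by (simp only:) (intro tendsto_intros dyadic_above_tendsto t(1))
  ultimately have "prob (\<Inter>m. ?E m) = min t 1 * prob A"
    by (rule LIMSEQ_unique)
  then show ?thesis
    using t by (simp add: dyadic_rank_level_set[OF al A t(1)])
qed

lemma borel_measurable_dyadic_rank:
  assumes al: "atomless M" and A: "A \<in> events"
  shows "dyadic_rank M A \<in> borel_measurable M"
proof (rule borel_measurable_iff_le[THEN iffD2], intro allI)
  fix s
  have "{\<omega>\<in>space M. dyadic_rank M A \<omega> \<le> s} =
      {\<omega>\<in>A. dyadic_rank M A \<omega> \<le> s} \<union> {\<omega>\<in>space M - A. 0 \<le> s}"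
    using sets.sets_into_space[OF A] by (auto simp: dyadic_rank_def)
  then show "{\<omega>\<in>space M. dyadic_rank M A \<omega> \<le> s} \<in> events"
    using events_dyadic_rank_le[OF al A] A by auto
qed

lemma AE_dyadic_rank_in_unit_interval:
  assumes al: "atomless M" and A: "A \<in> events"
  shows "AE \<omega> in M. \<omega> \<in> A \<longrightarrow> 0 < dyadic_rank M A \<omega> \<and> dyadic_rank M A \<omega> < 1"
proof -
  let ?R = "dyadic_rank M A"
  have [measurable]: "?R \<in> borel_measurable M"
    by (rule borel_measurable_dyadic_rank[OF al A])
  have R_level: "A \<inter> {\<omega>\<in>space M. ?R \<omega> \<le> t} = {\<omega>\<in>A. ?R \<omega> \<le> t}" for t
    using sets.sets_into_space[OF A] by auto
  have below_1: "A \<inter> {\<omega>\<in>space M. ?R \<omega> < 1} \<in> events"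
    using A by measurable
  have "prob A \<le> prob (A \<inter> {\<omega>\<in>space M. ?R \<omega> < 1})"
  proof (rule field_le_mult_one_interval)
    fix z :: real assume "0 < z" "z < 1"
    then have "z * prob A = prob (A \<inter> {\<omega>\<in>space M. ?R \<omega> \<le> z})"
      by (simp add: R_level prob_dyadic_rank_le[OF al A])
    also have "\<dots> \<le> prob (A \<inter> {\<omega>\<in>space M. ?R \<omega> < 1})"
      using below_1 \<open>z < 1\<close> by (intro finite_measure_mono) auto
    finally show "z * prob A \<le> prob (A \<inter> {\<omega>\<in>space M. ?R \<omega> < 1})" .
  qed
  then have "prob (A - A \<inter> {\<omega>\<in>space M. ?R \<omega> < 1}) = 0"
    using A below_1 finite_measure_mono[of "A \<inter> {\<omega>\<in>space M. ?R \<omega> < 1}" A]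
    by (simp add: finite_measure_Diff)
  moreover have "prob (A \<inter> {\<omega>\<in>space M. ?R \<omega> \<le> 0}) = 0"
    by (simp add: R_level prob_dyadic_rank_le[OF al A])
  ultimately have "AE \<omega> in M. \<omega> \<notin> A - A \<inter> {\<omega>\<in>space M. ?R \<omega> < 1}"
    "AE \<omega> in M. \<omega> \<notin> A \<inter> {\<omega>\<in>space M. ?R \<omega> \<le> 0}"
    using A below_1 by (simp_all add: prob_eq_0 sets.Diff)
  then show ?thesis
    by eventually_elim auto
qed

lemma atomless_uniform:
  assumes al: "atomless M" and A: "A \<in> events"
  obtains U where "U \<in> borel_measurable M" "\<And>\<omega>. 0 < U \<omega> \<and> U \<omega> < 1"
    "\<And>t. 0 \<le> t \<Longrightarrow> t \<le> 1 \<Longrightarrow> prob (A \<inter> {\<omega>\<in>space M. U \<omega> \<le> t}) = t * prob A"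
proof -
  let ?R = "dyadic_rank M A"
  have [measurable]: "?R \<in> borel_measurable M"
    by (rule borel_measurable_dyadic_rank[OF al A])
  define U where "U \<omega> = (if \<omega> \<in> A \<and> 0 < ?R \<omega> \<and> ?R \<omega> < 1 then ?R \<omega> else 1/2)" for \<omega>
  have U_meas[measurable]: "U \<in> borel_measurable M"
    unfolding U_def using A by measurable
  have U_range: "0 < U \<omega> \<and> U \<omega> < 1" for \<omega>
    unfolding U_def by auto
  have prob_U: "prob (A \<inter> {\<omega>\<in>space M. U \<omega> \<le> t}) = t * prob A" if "0 \<le> t" "t \<le> 1" for t
  proof -
    have "prob (A \<inter> {\<omega>\<in>space M. U \<omega> \<le> t}) = prob {\<omega>\<in>A. ?R \<omega> \<le> t}"
    proof (rule finite_measure_eq_AE)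
      show "AE \<omega> in M. \<omega> \<in> A \<inter> {\<omega>\<in>space M. U \<omega> \<le> t} \<longleftrightarrow> \<omega> \<in> {\<omega>\<in>A. ?R \<omega> \<le> t}"
        using AE_dyadic_rank_in_unit_interval[OF al A]
        by eventually_elim (use sets.sets_into_space[OF A] in \<open>auto simp: U_def\<close>)
      show "A \<inter> {\<omega>\<in>space M. U \<omega> \<le> t} \<in> events"
        using A by measurable
    qed (rule events_dyadic_rank_le[OF al A])
    then show ?thesis
      using that by (simp add: prob_dyadic_rank_le[OF al A])
  qed
  show ?thesis
    by (rule that[OF U_meas U_range prob_U])
qed

lemma distr_quantile_uniform_measure:
  fixes N :: "real measure"
  assumes N: "real_distribution N" and A: "A \<in> events" "prob A \<noteq> 0"
    and U_meas: "U \<in> borel_measurable M" and U_range: "\<And>\<omega>. 0 < U \<omega> \<and> U \<omega> < 1"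
    and U_unif: "\<And>t. 0 \<le> t \<Longrightarrow> t \<le> 1 \<Longrightarrow> prob (A \<inter> {\<omega>\<in>space M. U \<omega> \<le> t}) = t * prob A"
  shows "distr (uniform_measure M A) borel (\<lambda>\<omega>. Inf {x. U \<omega> \<le> cdf N x}) = N"
proof -
  interpret N: cdf_distribution N
    unfolding cdf_distribution_def by (rule N)
  let ?MA = "uniform_measure M A" and ?V = "\<lambda>\<omega>. Inf {x. U \<omega> \<le> cdf N x}"
  have eA: "emeasure M A \<noteq> 0" "emeasure M A \<noteq> \<infinity>"
    using A by (auto simp: emeasure_eq_measure)
  interpret MA: prob_space ?MA
    by (rule prob_space_uniform_measure[OF eA])
  have V_meas: "?V \<in> borel_measurable ?MA"
    using borel_measurable_quantile[OF N U_meas U_range] by (simp cong: measurable_cong_sets)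
  have V_le_iff: "?V \<omega> \<le> x \<longleftrightarrow> U \<omega> \<le> cdf N x" for \<omega> x
    using N.pseudoinverse U_range by metis
  show ?thesis
  proof (rule cdf_unique)
    show "cdf (distr ?MA borel ?V) = cdf N"
    proof
      fix x
      have "cdf (distr ?MA borel ?V) x = measure ?MA {\<omega>\<in>space M. U \<omega> \<le> cdf N x}"
        unfolding cdf_def[of "distr ?MA borel ?V"] using V_meas
        by (simp add: measure_distr_borel V_le_iff)
      also have "\<dots> = cdf N x"
        using A eA U_unif[of "cdf N x"] N.cdf_nonneg N.cdf_bounded_prob U_meas by simp
      finally show "cdf (distr ?MA borel ?V) x = cdf N x" .
    qed
  qed (use V_meas N in simp_all)
qed

lemma quantile_transform:
  fixes N :: "real measure"
  assumes N: "real_distribution N" and A: "A \<in> events"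
    and U_meas: "U \<in> borel_measurable M" and U_range: "\<And>\<omega>. 0 < U \<omega> \<and> U \<omega> < 1"
    and U_unif: "\<And>t. 0 \<le> t \<Longrightarrow> t \<le> 1 \<Longrightarrow> prob (A \<inter> {\<omega>\<in>space M. U \<omega> \<le> t}) = t * prob A"
  defines "V \<equiv> \<lambda>\<omega>. Inf {x. U \<omega> \<le> cdf N x}"
  shows "V \<in> borel_measurable M"
    and "B \<in> sets borel \<Longrightarrow> prob (A \<inter> {\<omega>\<in>space M. V \<omega> \<in> B}) = prob A * measure N B"
proof -
  show V_meas: "V \<in> borel_measurable M"
    unfolding V_def by (rule borel_measurable_quantile[OF N U_meas U_range])
  assume B: "B \<in> sets borel"
  have V_ev: "A \<inter> {\<omega>\<in>space M. V \<omega> \<in> B} \<in> events"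
    using A measurable_sets[OF V_meas B] by (auto simp: vimage_def Int_def conj_commute)
  show "prob (A \<inter> {\<omega>\<in>space M. V \<omega> \<in> B}) = prob A * measure N B"
  proof (cases "prob A = 0")
    case True
    then show ?thesis
      using A V_ev finite_measure_mono[of "A \<inter> {\<omega>\<in>space M. V \<omega> \<in> B}" A]
      by (simp add: measure_le_0_iff)
  next
    case False
    let ?MA = "uniform_measure M A"
    have "measure N B = measure (distr ?MA borel V) B"
      unfolding V_def using distr_quantile_uniform_measure[OF N A False U_meas U_range U_unif]
      by simp
    also have "\<dots> = measure ?MA {\<omega>\<in>space M. V \<omega> \<in> B}"
      using V_meas B by (simp add: measure_distr_borel cong: measurable_cong_sets)
    also have "\<dots> = prob (A \<inter> {\<omega>\<in>space M. V \<omega> \<in> B}) / prob A"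
      using A False measurable_sets[OF V_meas B]
      by (simp add: emeasure_eq_measure vimage_def Int_def conj_commute)
    finally show ?thesis
      using False by simp
  qed
qed

lemma exists_conditional_copy:
  fixes X :: "'a \<Rightarrow> real"
  assumes al: "atomless M" and A: "A \<in> events" and X: "X \<in> borel_measurable M"
  shows "\<exists>V\<in>borel_measurable M. \<forall>B\<in>sets borel.
    prob (A \<inter> {\<omega>\<in>space M. V \<omega> \<in> B}) = prob A * prob {\<omega>\<in>space M. X \<omega> \<in> B}"
proof -
  obtain U where U: "U \<in> borel_measurable M" "\<And>\<omega>. 0 < U \<omega> \<and> U \<omega> < 1"
    "\<And>t. 0 \<le> t \<Longrightarrow> t \<le> 1 \<Longrightarrow> prob (A \<inter> {\<omega>\<in>space M. U \<omega> \<le> t}) = t * prob A"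
    using atomless_uniform[OF al A] by blast
  note quantile = quantile_transform[OF real_distribution_distr[OF X] A U]
  show ?thesis
    using X by (intro bexI[OF _ quantile(1)] ballI) (simp add: quantile(2) measure_distr_borel)
qed

end

section \<open>Encoding a real vector by one real\<close>

definition binary_digit :: "nat \<Rightarrow> real \<Rightarrow> int" where
  "binary_digit k y = \<lfloor>2^(k+1) * y\<rfloor> - 2 * \<lfloor>2^k * y\<rfloor>"

lemma binary_digit_cases: "binary_digit k y = 0 \<or> binary_digit k y = 1"
proof -
  let ?z = "2^k * y"
  have "2^(k+1) * y = 2 * ?z"
    by simp
  moreover have "real_of_int \<lfloor>?z\<rfloor> \<le> ?z" "?z < real_of_int \<lfloor>?z\<rfloor> + 1"
    "real_of_int \<lfloor>2 * ?z\<rfloor> \<le> 2 * ?z" "2 * ?z < real_of_int \<lfloor>2 * ?z\<rfloor> + 1"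
    by linarith+
  ultimately have "2 * \<lfloor>?z\<rfloor> \<le> \<lfloor>2^(k+1) * y\<rfloor>" "\<lfloor>2^(k+1) * y\<rfloor> \<le> 2 * \<lfloor>?z\<rfloor> + 1"
    by linarith+
  then show ?thesis
    unfolding binary_digit_def by linarith
qed

lemma sum_binary_digit:
  "(\<Sum>k<N. real_of_int (binary_digit k y) / 2^(k+1)) = real_of_int \<lfloor>2^N * y\<rfloor> / 2^N - real_of_int \<lfloor>y\<rfloor>"
proof (induction N)
  case (Suc N)
  have "real_of_int (binary_digit N y) / 2^(N+1) =
      real_of_int \<lfloor>2^(N+1) * y\<rfloor> / 2^(N+1) - real_of_int \<lfloor>2^N * y\<rfloor> / 2^N"
    unfolding binary_digit_def by (simp add: field_simps)
  then show ?case
    using Suc by simp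
qed simp

lemma sums_binary_digit:
  assumes "0 \<le> y" "y < 1"
  shows "(\<lambda>k. real_of_int (binary_digit k y) / 2^(k+1)) sums y"
proof -
  have "(\<lambda>N. real_of_int \<lfloor>2^N * y\<rfloor> / 2^N) \<longlonglongrightarrow> y"
  proof (rule tendsto_sandwich[of "\<lambda>N. y - (1/2)^N" _ _ "\<lambda>_. y"])
    have "y - (1/2)^N \<le> real_of_int \<lfloor>2^N * y\<rfloor> / 2^N" for N :: nat
    proof -
      have "(2^N * y - 1) / 2^N \<le> real_of_int \<lfloor>2^N * y\<rfloor> / 2^N"
        using real_of_int_floor_add_one_gt[of "2^N * y"] by (intro divide_right_mono) simp_all
      then show ?thesis
        by (simp add: diff_divide_distrib power_one_over)
    qed
    then show "\<forall>\<^sub>F N in sequentially. y - (1/2)^N \<le> real_of_int \<lfloor>2^N * y\<rfloor> / 2^N"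
      by simp
    have "real_of_int \<lfloor>2^N * y\<rfloor> / 2^N \<le> y" for N :: nat
      using of_int_floor_le[of "2^N * y"] by (simp add: field_simps)
    then show "\<forall>\<^sub>F N in sequentially. real_of_int \<lfloor>2^N * y\<rfloor> / 2^N \<le> y"
      by simp
    show "(\<lambda>N. y - (1/2::real)^N) \<longlonglongrightarrow> y"
      using tendsto_diff[OF tendsto_const LIMSEQ_power_zero[of "1/2::real"]] by simp
  qed simp
  moreover have "\<lfloor>y\<rfloor> = 0"
    using assms by (simp add: floor_eq_iff)
  ultimately show ?thesis
    unfolding sums_def sum_binary_digit by simp
qed

lemma floor_base4_suminf:
  fixes a :: "nat \<Rightarrow> int"
  assumes a: "\<And>j. a j = 0 \<or> a j = 1"
  shows "\<lfloor>4^m * (\<Sum>j. real_of_int (a j) / 4^(j+1))\<rfloor> = (\<Sum>j<m. a j * 4^(m - Suc j))"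
proof -
  define f where "f j = real_of_int (a j) / 4^(j+1)" for j
  have f_bounds: "0 \<le> f j" "f j \<le> (1/4)^(j+1)" for j
    using a[of j] unfolding f_def by (auto simp: power_one_over)
  have geom_sums: "(\<lambda>j. (1/4::real)^(j+1)) sums (1/3)"
    using sums_mult[OF geometric_sums[of "1/4::real"], of "1/4"] by simp
  then have geom: "summable (\<lambda>j. (1/4::real)^(j+1))"
    by (rule sums_summable)
  have "summable f"
    using f_bounds by (intro summable_comparison_test'[OF geom, of 0]) simp
  then have split: "(\<Sum>j. f j) = (\<Sum>j. f (j + m)) + (\<Sum>j<m. f j)"
    and tail: "summable (\<lambda>j. f (j + m))"
    by (auto intro: suminf_split_initial_segment summable_ignore_initial_segment)
  have head: "4^m * (\<Sum>j<m. f j) = real_of_int (\<Sum>j<m. a j * 4^(m - Suc j))"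
    unfolding sum_distrib_left of_int_sum
  proof (rule sum.cong[OF refl])
    fix j assume "j \<in> {..<m}"
    then have "(4::real)^m = 4^((j+1) + (m - Suc j))"
      by simp
    then have "(4::real)^m = 4^(j+1) * 4^(m - Suc j)"
      by (simp only: power_add)
    then show "4^m * f j = real_of_int (a j * 4^(m - Suc j))"
      unfolding f_def by simp
  qed
  have "f (j + m) \<le> (1/4)^m * (1/4::real)^(j+1)" for j
    using f_bounds(2)[of "j + m"] by (simp add: power_add mult_ac)
  then have "(\<Sum>j. f (j + m)) \<le> (\<Sum>j. (1/4)^m * (1/4::real)^(j+1))"
    using tail geom by (intro suminf_le summable_mult) auto
  also have "\<dots> = (1/4)^m * (1/3)"
    using suminf_mult[OF geom] sums_unique[OF geom_sums] by simp
  finally have "4^m * (\<Sum>j. f (j + m)) \<le> 1/3"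
    by (simp add: power_one_over field_simps)
  moreover have "0 \<le> 4^m * (\<Sum>j. f (j + m))"
    using f_bounds tail by (simp add: suminf_nonneg)
  ultimately show ?thesis
    unfolding f_def[symmetric] split distrib_left head by (simp add: floor_eq_iff)
qed

lemma base4_digit_suminf:
  fixes a :: "nat \<Rightarrow> int"
  assumes a: "\<And>j. a j = 0 \<or> a j = 1"
  defines "c \<equiv> \<Sum>j. real_of_int (a j) / 4^(j+1)"
  shows "\<lfloor>4^(m+1) * c\<rfloor> - 4 * \<lfloor>4^m * c\<rfloor> = a m"
proof -
  have "(\<Sum>j<m. a j * 4^(Suc m - Suc j)) = 4 * (\<Sum>j<m. a j * 4^(m - Suc j))"
    unfolding sum_distrib_left
  proof (intro sum.cong refl)
    fix j assume "j \<in> {..<m}"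
    then have "Suc m - Suc j = Suc (m - Suc j)"
      by simp
    then show "a j * 4^(Suc m - Suc j) = 4 * (a j * 4^(m - Suc j))"
      by simp
  qed
  then show ?thesis
    unfolding c_def using floor_base4_suminf[OF a, of "Suc m"] floor_base4_suminf[OF a, of m]
    by simp
qed

definition squash :: "real \<Rightarrow> real" where
  "squash x = arctan x / pi + 1/2"

definition unsquash :: "real \<Rightarrow> real" where
  "unsquash y = tan (pi * (y - 1/2))"

lemma unsquash_squash: "unsquash (squash x) = x"
  unfolding squash_def unsquash_def by (simp add: field_simps tan_arctan)

lemma squash_range: "0 \<le> squash x \<and> squash x < 1"
proof -
  have "- (pi/2) / pi < arctan x / pi" "arctan x / pi < (pi/2) / pi"
    by (intro divide_strict_right_mono arctan_lbound arctan_ubound pi_gt_zero)+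
  then show ?thesis
    unfolding squash_def using pi_gt_zero by (simp add: field_simps)
qed

text \<open>Since only the digits \<open>0\<close> and \<open>1\<close> occur, the
  base-4 expansion is unique and \<open>decode_coord n i\<close> can read these digits back.\<close>

definition encode_vector :: "nat \<Rightarrow> (nat \<Rightarrow> real) \<Rightarrow> real" where
  "encode_vector n x = (\<Sum>m. real_of_int (binary_digit (m div n) (squash (x (m mod n)))) / 4^(m+1))"

definition decode_coord :: "nat \<Rightarrow> nat \<Rightarrow> real \<Rightarrow> real" where
  "decode_coord n i c = unsquash
     (\<Sum>k. real_of_int (\<lfloor>4^(k*n+i+1) * c\<rfloor> - 4 * \<lfloor>4^(k*n+i) * c\<rfloor>) / 2^(k+1))"

lemma decode_encode_vector:
  assumes "i < n"
  shows "decode_coord n i (encode_vector n x) = x i"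
proof -
  define a where "a m = binary_digit (m div n) (squash (x (m mod n)))" for m
  have "\<lfloor>4^(k*n+i+1) * encode_vector n x\<rfloor> - 4 * \<lfloor>4^(k*n+i) * encode_vector n x\<rfloor> =
      binary_digit k (squash (x i))" for k
  proof -
    have "a (k*n+i) = binary_digit k (squash (x i))"
      using assms unfolding a_def by simp
    then show ?thesis
      unfolding encode_vector_def a_def[symmetric]
      using base4_digit_suminf[of a "k*n+i"] binary_digit_cases unfolding a_def by simp
  qed
  then show ?thesis
    unfolding decode_coord_def
    using sums_binary_digit[of "squash (x i)"] squash_range[of "x i"]
    by (simp add: sums_iff unsquash_squash)
qed

lemma borel_measurable_squash[measurable]: "squash \<in> borel_measurable borel"
  unfolding squash_def[abs_def] by (intro borel_measurable_continuous_onI continuous_intros) simp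

lemma borel_measurable_unsquash[measurable]: "unsquash \<in> borel_measurable borel"
  unfolding unsquash_def[abs_def] tan_def by measurable

lemma borel_measurable_decode_coord[measurable]: "decode_coord n i \<in> borel_measurable borel"
  unfolding decode_coord_def[abs_def] by measurable

lemma borel_measurable_encode_vector:
  assumes "0 < n" "\<And>i. i < n \<Longrightarrow> X i \<in> borel_measurable M"
  shows "(\<lambda>\<omega>. encode_vector n (\<lambda>i. X i \<omega>)) \<in> borel_measurable M"
proof -
  have [measurable]: "X (m mod n) \<in> borel_measurable M" for m
    using assms by simp
  then show ?thesis
    unfolding encode_vector_def binary_digit_def by measurable
qed

section \<open>Cyclic mixtures\<close>

lemma nat_ceiling_minus_one_eq_iff:
  assumes "0 < x"
  shows "nat \<lceil>x\<rceil> - 1 = k \<longleftrightarrow> real k < x \<and> x \<le> real k + 1"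
proof -
  have "nat \<lceil>x\<rceil> - 1 = k \<longleftrightarrow> \<lceil>x\<rceil> = int k + 1"
    using assms by linarith
  also have "\<dots> \<longleftrightarrow> real k < x \<and> x \<le> real k + 1"
    by (simp add: ceiling_eq_iff)
  finally show ?thesis .
qed

lemma sum_mod_shift:
  fixes f :: "nat \<Rightarrow> 'b::cancel_comm_monoid_add"
  assumes "0 < n"
  shows "(\<Sum>k<n. f ((i + k) mod n)) = (\<Sum>k<n. f k)"
proof -
  have "(\<Sum>k<n. f ((i + k) mod n)) = (\<Sum>k<n. f (k mod n))"
  proof (induction i)
    case (Suc i)
    have "f (i mod n) + (\<Sum>k<n. f ((Suc i + k) mod n)) = (\<Sum>k<Suc n. f ((i + k) mod n))"
      by (simp only: sum.lessThan_Suc_shift add_Suc_right add_Suc add_0_right)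
    also have "\<dots> = f (i mod n) + (\<Sum>k<n. f ((i + k) mod n))"
      by (simp add: add.commute)
    finally show ?case
      using Suc by simp
  qed simp
  also have "\<dots> = (\<Sum>k<n. f k)"
    by (intro sum.cong) auto
  finally show ?thesis .
qed

lemma sum_mat_mix:
  assumes "doubly_stochastic n L"
  shows "(\<Sum>i<n. mat_mix n L F i x) = (\<Sum>j<n. F j x)"
proof -
  have "(\<Sum>i<n. mat_mix n L F i x) = (\<Sum>j<n. (\<Sum>i<n. L i j) * F j x)"
    unfolding mat_mix_def sum_distrib_right by (rule sum.swap)
  also have "\<dots> = (\<Sum>j<n. F j x)"
    using assms unfolding doubly_stochastic_def by simp
  finally show ?thesis .
qed

context prob_space
begin

lemma exists_uniform_index:
  fixes n :: nat
  assumes al: "atomless M" and n: "0 < n"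
  obtains K where "K \<in> measurable M (count_space UNIV)" "\<And>\<omega>. K \<omega> < n"
    "\<And>k. k < n \<Longrightarrow> prob {\<omega>\<in>space M. K \<omega> = k} = 1 / real n"
proof -
  obtain U where U_meas[measurable]: "U \<in> borel_measurable M"
    and U_range: "\<And>\<omega>. 0 < U \<omega> \<and> U \<omega> < 1"
    and U_unif: "\<And>t. 0 \<le> t \<Longrightarrow> t \<le> 1 \<Longrightarrow> prob {\<omega>\<in>space M. U \<omega> \<le> t} = t"
    by (rule atomless_uniform[OF al sets.top]) (simp_all add: Int_absorb1 prob_space)
  define K where "K \<omega> = nat \<lceil>real n * U \<omega>\<rceil> - 1" for \<omega>
  have K_eq: "K \<omega> = k \<longleftrightarrow> real k / real n < U \<omega> \<and> U \<omega> \<le> (real k + 1) / real n" for \<omega> k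
    using nat_ceiling_minus_one_eq_iff[of "real n * U \<omega>" k] U_range[of \<omega>] n
    unfolding K_def by (simp add: field_simps)
  have K_lt: "K \<omega> < n" for \<omega>
  proof -
    have "real n * U \<omega> \<le> real n"
      using U_range[of \<omega>] by (intro mult_left_le) auto
    then have "nat \<lceil>real n * U \<omega>\<rceil> \<le> n"
      by (simp add: nat_le_iff ceiling_le_iff)
    then show ?thesis
      unfolding K_def using n by linarith
  qed
  have K_meas: "K \<in> measurable M (count_space UNIV)"
    unfolding K_def by measurable
  have "prob {\<omega>\<in>space M. K \<omega> = k} = 1 / real n" if "k < n" for k
  proof -
    have "prob {\<omega>\<in>space M. K \<omega> = k} = prob
        ({\<omega>\<in>space M. U \<omega> \<le> (real k + 1) / real n} - {\<omega>\<in>space M. U \<omega> \<le> real k / real n})"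
      by (rule arg_cong[where f=prob]) (auto simp: K_eq)
    also have "\<dots> = prob {\<omega>\<in>space M. U \<omega> \<le> (real k + 1) / real n} -
        prob {\<omega>\<in>space M. U \<omega> \<le> real k / real n}"
      using divide_right_mono[of "real k" "real k + 1" "real n"]
      by (intro finite_measure_Diff) auto
    also have "\<dots> = (real k + 1) / real n - real k / real n"
      using that by (simp add: U_unif)
    finally show ?thesis
      by (simp add: diff_divide_distrib[symmetric])
  qed
  with K_meas K_lt show ?thesis
    using that by blast
qed

lemma exists_copy_independent_of_index:
  fixes K :: "'a \<Rightarrow> nat" and W :: "'a \<Rightarrow> real"
  assumes al: "atomless M" and K: "K \<in> measurable M (count_space UNIV)"
    and W: "W \<in> borel_measurable M"
  obtains V where "V \<in> borel_measurable M"
    "\<And>k B. B \<in> sets borel \<Longrightarrow>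
      prob {\<omega>\<in>space M. K \<omega> = k \<and> V \<omega> \<in> B} =
      prob {\<omega>\<in>space M. K \<omega> = k} * prob {\<omega>\<in>space M. W \<omega> \<in> B}"
proof -
  have "{\<omega>\<in>space M. K \<omega> = k} \<in> events" for k
    using K by measurable
  then have "\<forall>k. \<exists>V. V \<in> borel_measurable M \<and> (\<forall>B\<in>sets borel.
      prob ({\<omega>\<in>space M. K \<omega> = k} \<inter> {\<omega>\<in>space M. V \<omega> \<in> B}) =
      prob {\<omega>\<in>space M. K \<omega> = k} * prob {\<omega>\<in>space M. W \<omega> \<in> B})"
    using exists_conditional_copy[OF al _ W] by blast
  from choice[OF this] obtain Vs where Vs: "\<And>k. Vs k \<in> borel_measurable M"
    "\<And>k B. B \<in> sets borel \<Longrightarrow>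
      prob ({\<omega>\<in>space M. K \<omega> = k} \<inter> {\<omega>\<in>space M. Vs k \<omega> \<in> B}) =
      prob {\<omega>\<in>space M. K \<omega> = k} * prob {\<omega>\<in>space M. W \<omega> \<in> B}"
    by blast
  define V where "V \<omega> = Vs (K \<omega>) \<omega>" for \<omega>
  have "{\<omega>\<in>space M. K \<omega> = k \<and> V \<omega> \<in> B} =
      {\<omega>\<in>space M. K \<omega> = k} \<inter> {\<omega>\<in>space M. Vs k \<omega> \<in> B}" for k B
    by (auto simp: V_def)
  moreover have "V \<in> borel_measurable M"
    unfolding V_def by (rule measurable_compose_countable[OF Vs(1) K])
  ultimately show ?thesis
    using that Vs(2) by simp
qed

lemma prob_indexed_copy:
  fixes n :: nat and V W :: "'a \<Rightarrow> real"
  assumes K: "K \<in> measurable M (count_space UNIV)" "\<And>\<omega>. K \<omega> < n"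
    and V: "V \<in> borel_measurable M" and W: "W \<in> borel_measurable M"
    and KV: "\<And>k B. k < n \<Longrightarrow> B \<in> sets borel \<Longrightarrow>
      prob {\<omega>\<in>space M. K \<omega> = k \<and> V \<omega> \<in> B} = prob {\<omega>\<in>space M. W \<omega> \<in> B} / real n"
    and f: "\<And>k. k < n \<Longrightarrow> f k \<in> borel_measurable borel" and B: "B \<in> sets borel"
  shows "prob {\<omega>\<in>space M. f (K \<omega>) (V \<omega>) \<in> B} = (\<Sum>k<n. prob {\<omega>\<in>space M. f k (W \<omega>) \<in> B}) / real n"
proof -
  have fB: "f k -` B \<in> sets borel" if "k < n" for k
    using measurable_sets[OF f[OF that] B] by simp
  have ev: "{\<omega>\<in>space M. K \<omega> = k \<and> V \<omega> \<in> f k -` B} \<in> events" if "k < n" for k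
  proof -
    have "{\<omega>\<in>space M. K \<omega> = k \<and> V \<omega> \<in> f k -` B} =
        (K -` {k} \<inter> space M) \<inter> (V -` (f k -` B) \<inter> space M)"
      by auto
    then show ?thesis
      using measurable_sets[OF K(1), of "{k}"] measurable_sets[OF V fB[OF that]] by auto
  qed
  have "{\<omega>\<in>space M. f (K \<omega>) (V \<omega>) \<in> B} = (\<Union>k\<in>{..<n}. {\<omega>\<in>space M. K \<omega> = k \<and> V \<omega> \<in> f k -` B})"
    using K(2) by auto
  also have "prob \<dots> = (\<Sum>k<n. prob {\<omega>\<in>space M. K \<omega> = k \<and> V \<omega> \<in> f k -` B})"
  proof (rule finite_measure_finite_Union)
    show "(\<lambda>k. {\<omega>\<in>space M. K \<omega> = k \<and> V \<omega> \<in> f k -` B}) ` {..<n} \<subseteq> events"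
      using ev by blast
  qed (auto simp: disjoint_family_on_def)
  also have "\<dots> = (\<Sum>k<n. prob {\<omega>\<in>space M. W \<omega> \<in> f k -` B} / real n)"
    using fB by (intro sum.cong refl KV) auto
  finally show ?thesis
    by (simp add: sum_divide_distrib)
qed

lemma prob_cyclic_shift:
  fixes n :: nat and V W :: "'a \<Rightarrow> real" and g :: "nat \<Rightarrow> real \<Rightarrow> real"
  assumes n: "0 < n" and K: "K \<in> measurable M (count_space UNIV)" "\<And>\<omega>. K \<omega> < n"
    and V: "V \<in> borel_measurable M" and W: "W \<in> borel_measurable M"
    and KV: "\<And>k B. k < n \<Longrightarrow> B \<in> sets borel \<Longrightarrow>
      prob {\<omega>\<in>space M. K \<omega> = k \<and> V \<omega> \<in> B} = prob {\<omega>\<in>space M. W \<omega> \<in> B} / real n"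
    and g: "\<And>j. g j \<in> borel_measurable borel" and B: "B \<in> sets borel"
  shows "prob {\<omega>\<in>space M. g ((i + K \<omega>) mod n) (V \<omega>) \<in> B} =
      (\<Sum>j<n. prob {\<omega>\<in>space M. g j (W \<omega>) \<in> B}) / real n"
    and "prob {\<omega>\<in>space M. (\<Sum>i<n. g ((i + K \<omega>) mod n) (V \<omega>)) \<in> B} =
      prob {\<omega>\<in>space M. (\<Sum>j<n. g j (W \<omega>)) \<in> B}"
proof -
  have g_shift: "\<And>k. k < n \<Longrightarrow> g ((i + k) mod n) \<in> borel_measurable borel"
    using g by simp
  have "prob {\<omega>\<in>space M. g ((i + K \<omega>) mod n) (V \<omega>) \<in> B} =
      (\<Sum>k<n. prob {\<omega>\<in>space M. g ((i + k) mod n) (W \<omega>) \<in> B}) / real n"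
    using K V W KV g_shift B by (rule prob_indexed_copy)
  also have "\<dots> = (\<Sum>j<n. prob {\<omega>\<in>space M. g j (W \<omega>) \<in> B}) / real n"
    using sum_mod_shift[OF n, of "\<lambda>j. prob {\<omega>\<in>space M. g j (W \<omega>) \<in> B}"] by simp
  finally show "prob {\<omega>\<in>space M. g ((i + K \<omega>) mod n) (V \<omega>) \<in> B} =
      (\<Sum>j<n. prob {\<omega>\<in>space M. g j (W \<omega>) \<in> B}) / real n" .
  define g_sum where "g_sum c = (\<Sum>j<n. g j c)" for c
  have sum_shift: "(\<Sum>i<n. g ((i + K \<omega>) mod n) (V \<omega>)) = g_sum (V \<omega>)" for \<omega>
    unfolding g_sum_def using sum_mod_shift[OF n, of "\<lambda>j. g j (V \<omega>)" "K \<omega>"]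
    by (simp add: add.commute)
  have g_sum: "\<And>k. k < n \<Longrightarrow> g_sum \<in> borel_measurable borel"
    unfolding g_sum_def using g by simp
  have "prob {\<omega>\<in>space M. g_sum (V \<omega>) \<in> B} =
      (\<Sum>k<n. prob {\<omega>\<in>space M. g_sum (W \<omega>) \<in> B}) / real n"
    using K V W KV g_sum B by (rule prob_indexed_copy[where f="\<lambda>_. g_sum"])
  then show "prob {\<omega>\<in>space M. (\<Sum>i<n. g ((i + K \<omega>) mod n) (V \<omega>)) \<in> B} =
      prob {\<omega>\<in>space M. (\<Sum>j<n. g j (W \<omega>)) \<in> B}"
    unfolding sum_shift using n by (simp add: g_sum_def)
qed

lemma exists_cyclic_mixture:
  fixes X :: "nat \<Rightarrow> 'a \<Rightarrow> real"
  assumes al: "atomless M" and n: "0 < n" and X: "\<And>i. i < n \<Longrightarrow> X i \<in> borel_measurable M"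
  obtains Y where "\<And>i. i < n \<Longrightarrow> Y i \<in> borel_measurable M"
    "\<And>i B. i < n \<Longrightarrow> B \<in> sets borel \<Longrightarrow>
      prob {\<omega>\<in>space M. Y i \<omega> \<in> B} = (\<Sum>j<n. prob {\<omega>\<in>space M. X j \<omega> \<in> B}) / real n"
    "\<And>B. B \<in> sets borel \<Longrightarrow>
      prob {\<omega>\<in>space M. (\<Sum>i<n. Y i \<omega>) \<in> B} = prob {\<omega>\<in>space M. (\<Sum>i<n. X i \<omega>) \<in> B}"
proof -
  define W where "W \<omega> = encode_vector n (\<lambda>i. X i \<omega>)" for \<omega>
  have W_meas: "W \<in> borel_measurable M"
    unfolding W_def by (rule borel_measurable_encode_vector[OF n X])
  have decode_W: "decode_coord n j (W \<omega>) = X j \<omega>" if "j < n" for j \<omega>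
    unfolding W_def using decode_encode_vector[OF that] .
  obtain K where K: "K \<in> measurable M (count_space UNIV)" "\<And>\<omega>. K \<omega> < n"
    and prob_K: "\<And>k. k < n \<Longrightarrow> prob {\<omega>\<in>space M. K \<omega> = k} = 1 / real n"
    by (rule exists_uniform_index[OF al n]) blast
  obtain V where V: "V \<in> borel_measurable M"
    and V_indep: "\<And>k B. B \<in> sets borel \<Longrightarrow>
      prob {\<omega>\<in>space M. K \<omega> = k \<and> V \<omega> \<in> B} =
      prob {\<omega>\<in>space M. K \<omega> = k} * prob {\<omega>\<in>space M. W \<omega> \<in> B}"
    by (rule exists_copy_independent_of_index[OF al K(1) W_meas]) blast
  have KV: "prob {\<omega>\<in>space M. K \<omega> = k \<and> V \<omega> \<in> B} = prob {\<omega>\<in>space M. W \<omega> \<in> B} / real n"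
    if "k < n" "B \<in> sets borel" for k B
    using V_indep[OF that(2)] prob_K[OF that(1)] by simp
  show ?thesis
  proof (rule that[of "\<lambda>i \<omega>. decode_coord n ((i + K \<omega>) mod n) (V \<omega>)"])
    show "(\<lambda>\<omega>. decode_coord n ((i + K \<omega>) mod n) (V \<omega>)) \<in> borel_measurable M" for i
      using V by (intro measurable_compose_countable[OF _ K(1),
            where f="\<lambda>k \<omega>. decode_coord n ((i + k) mod n) (V \<omega>)"]) measurable
  next
    fix i and B :: "real set" assume "B \<in> sets borel"
    have "prob {\<omega>\<in>space M. decode_coord n ((i + K \<omega>) mod n) (V \<omega>) \<in> B} =
        (\<Sum>j<n. prob {\<omega>\<in>space M. decode_coord n j (W \<omega>) \<in> B}) / real n"
      using n K V W_meas KV borel_measurable_decode_coord \<open>B \<in> sets borel\<close>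
      by (rule prob_cyclic_shift(1))
    then show "prob {\<omega>\<in>space M. decode_coord n ((i + K \<omega>) mod n) (V \<omega>) \<in> B} =
        (\<Sum>j<n. prob {\<omega>\<in>space M. X j \<omega> \<in> B}) / real n"
      by (simp add: decode_W)
  next
    fix B :: "real set" assume "B \<in> sets borel"
    have "prob {\<omega>\<in>space M. (\<Sum>i<n. decode_coord n ((i + K \<omega>) mod n) (V \<omega>)) \<in> B} =
        prob {\<omega>\<in>space M. (\<Sum>j<n. decode_coord n j (W \<omega>)) \<in> B}"
      using n K V W_meas KV borel_measurable_decode_coord \<open>B \<in> sets borel\<close>
      by (rule prob_cyclic_shift(2))
    then show "prob {\<omega>\<in>space M. (\<Sum>i<n. decode_coord n ((i + K \<omega>) mod n) (V \<omega>)) \<in> B} =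
        prob {\<omega>\<in>space M. (\<Sum>i<n. X i \<omega>) \<in> B}"
      by (simp add: decode_W)
  qed
qed

lemma Dn_subset_Dn_average:
  assumes "atomless M"
  shows "Dn M n G \<subseteq> Dn M n (\<lambda>_ x. (\<Sum>j<n. G j x) / real n)"
proof
  fix H assume "H \<in> Dn M n G"
  then obtain X where X: "\<And>i. i < n \<Longrightarrow> X i \<in> borel_measurable M"
    and cdf_X: "\<And>i. i < n \<Longrightarrow> cdf (distr M borel (X i)) = G i"
    and H: "H = cdf (distr M borel (\<lambda>\<omega>. \<Sum>i<n. X i \<omega>))"
    unfolding Dn_def by blast
  show "H \<in> Dn M n (\<lambda>_ x. (\<Sum>j<n. G j x) / real n)"
  proof (cases "n = 0")
    case True
    then show ?thesis
      unfolding Dn_def H by auto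
  next
    case False
    obtain Y where Y: "\<And>i. i < n \<Longrightarrow> Y i \<in> borel_measurable M"
      and law_Y: "\<And>i B. i < n \<Longrightarrow> B \<in> sets borel \<Longrightarrow>
        prob {\<omega>\<in>space M. Y i \<omega> \<in> B} = (\<Sum>j<n. prob {\<omega>\<in>space M. X j \<omega> \<in> B}) / real n"
      and law_sum: "\<And>B. B \<in> sets borel \<Longrightarrow>
        prob {\<omega>\<in>space M. (\<Sum>i<n. Y i \<omega>) \<in> B} = prob {\<omega>\<in>space M. (\<Sum>i<n. X i \<omega>) \<in> B}"
      by (rule exists_cyclic_mixture[OF assms, where n=n and X=X]) (use False X in auto)
    have G_sum: "(\<Sum>j<n. G j x) = (\<Sum>j<n. prob {\<omega>\<in>space M. X j \<omega> \<le> x})" for x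
      using X by (intro sum.cong refl) (simp add: cdf_distr_borel flip: cdf_X)
    have "cdf (distr M borel (Y i)) = (\<lambda>x. (\<Sum>j<n. G j x) / real n)" if "i < n" for i
    proof
      fix x
      show "cdf (distr M borel (Y i)) x = (\<Sum>j<n. G j x) / real n"
        using law_Y[OF that, of "{..x}"] Y[OF that] by (simp add: cdf_distr_borel G_sum)
    qed
    moreover have "H = cdf (distr M borel (\<lambda>\<omega>. \<Sum>i<n. Y i \<omega>))"
    proof
      fix x
      have "(\<lambda>\<omega>. \<Sum>i<n. X i \<omega>) \<in> borel_measurable M" "(\<lambda>\<omega>. \<Sum>i<n. Y i \<omega>) \<in> borel_measurable M"
        using X Y by (auto intro!: borel_measurable_sum)
      then show "H x = cdf (distr M borel (\<lambda>\<omega>. \<Sum>i<n. Y i \<omega>)) x"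
        using law_sum[of "{..x}"] by (simp add: H cdf_distr_borel)
    qed
    ultimately show ?thesis
      unfolding Dn_def using Y by (intro CollectI exI[of _ Y]) simp
  qed
qed

end

theorem corollary3:
  fixes M :: "'a measure" and n :: nat and F :: "nat \<Rightarrow> real \<Rightarrow> real"
    and L :: "nat \<Rightarrow> nat \<Rightarrow> real"
  assumes "prob_space M" and "atomless M"
    and "\<forall>i<n. is_cdf (F i)"
    and "doubly_stochastic n L"
  shows "Dn M n (mat_mix n L F) \<subseteq> Dn M n (\<lambda>_ x. (1 / real n) * (\<Sum>i<n. F i x))"
proof -
  interpret prob_space M
    by fact
  have "Dn M n (mat_mix n L F) \<subseteq> Dn M n (\<lambda>_ x. (\<Sum>j<n. mat_mix n L F j x) / real n)"
    by (rule Dn_subset_Dn_average[OF \<open>atomless M\<close>])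
  also have "(\<lambda>_ x. (\<Sum>j<n. mat_mix n L F j x) / real n) = (\<lambda>_ x. (1 / real n) * (\<Sum>i<n. F i x))"
    using sum_mat_mix[OF \<open>doubly_stochastic n L\<close>] by simp
  finally show ?thesis .
qed

end
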